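(* If $n\ge4$ and $h$ is even with $h\ge\frac{2(n-1)}{n-3}$, then there exists $p\in\mathcal P$ such that $D_{\mu(p)}(p)=D_{\mu(p^r)}(p^r)=\{n\}$.
   Context: Let $n,h\ge2$ be integers, $N=\{1,\dots,n\}$, $H=\{1,\dots,h\}$. $\mathcal P$ is the set of $h$-tuples $p=(p_1,\dots,p_h)$ of linear orders on $N$; $p^r$ is obtained by reversing each $p_i$; $x>_{p_i}y$ means $x\ne y$ and $p_i$ ranks $x$ above $y$. For an integer $\mu$ with $h/2<\mu\le h$, $D_\mu(p)=\{x\in N: \forall y\in N,\ |\{i: y>_{p_i}x\}|<\mu\}$, and $\mu(p)=\min\{\mu\in\mathbb N\cap(h/2,h]: D_\mu(p)\neq\varnothing\}$. *)

theory Defs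
  imports Complex_Main
begin

text \<open>A linear order on N = {1..n} is a relation r with (x,y) in r meaning
 "x is ranked at or below y", i.e. y is ranked weakly above x. A profile is a function
 from voter indices to such relations; only indices in H = {1..h} matter.\<close>

definition is_profile :: "nat \<Rightarrow> nat \<Rightarrow> (nat \<Rightarrow> nat rel) \<Rightarrow> bool" where
  "is_profile n h p \<longleftrightarrow> (\<forall>i\<in>{1..h}. linear_order_on {1..n} (p i))"

definition pref :: "nat rel \<Rightarrow> nat \<Rightarrow> nat \<Rightarrow> bool" where
  "pref r x y \<longleftrightarrow> x \<noteq> y \<and> (y, x) \<in> r"

definition rev_profile :: "(nat \<Rightarrow> nat rel) \<Rightarrow> (nat \<Rightarrow> nat rel)" where
  "rev_profile p = (\<lambda>i. (p i)\<inverse>)"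

definition D :: "nat \<Rightarrow> nat \<Rightarrow> nat \<Rightarrow> (nat \<Rightarrow> nat rel) \<Rightarrow> nat set" where
  "D n h \<mu> p = {x \<in> {1..n}. \<forall>y\<in>{1..n}. card {i \<in> {1..h}. pref (p i) y x} < \<mu>}"

definition mu :: "nat \<Rightarrow> nat \<Rightarrow> (nat \<Rightarrow> nat rel) \<Rightarrow> nat" where
  "mu n h p = (LEAST m. h < 2 * m \<and> m \<le> h \<and> D n h m p \<noteq> {})"

end

theory Submission
  imports Defs
begin

text \<open>Let \<open>k = h/2\<close>. Voter \<open>i\<close> puts \<open>n\<close> on top if \<open>i \<le> k\<close> and at the bottom
  otherwise, and ranks \<open>1, \<dots>, n-1\<close> by the cyclic shift by \<open>i\<close>. Then every \<open>y\<close> beats \<open>n\<close> at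
  most \<open>k\<close> times, in \<open>p\<close> as well as in \<open>p\<^sup>r\<close>. Every other alternative \<open>x\<close> is beaten by its
  cyclic successor (its cyclic predecessor in \<open>p\<^sup>r\<close>) by all voters except those for which the
  cyclic shift wraps around between the two, and there are at most \<open>\<lceil>h/(n-1)\<rceil> \<le> k - 1\<close> of
  these; the bound on \<open>h\<close> is exactly what makes this inequality hold. So \<open>x\<close> is beaten at least
  \<open>k + 1\<close> times, whence \<open>D\<^sub>k\<^sub>+\<^sub>1 = {n}\<close> and \<open>\<mu> = k + 1\<close> for both profiles.\<close>

definition rank_order :: "nat set \<Rightarrow> (nat \<Rightarrow> 'b::linorder) \<Rightarrow> nat rel" where
  "rank_order A f = {(x, y). x \<in> A \<and> y \<in> A \<and> f x \<le> f y}"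

lemma linear_order_on_rank_order:
  assumes "inj_on f A"
  shows "linear_order_on A (rank_order A f)"
  using assms unfolding rank_order_def linear_order_on_def partial_order_on_def preorder_on_def
    refl_on_def trans_def antisym_def total_on_def inj_on_def
  by auto

lemma pref_rank_order:
  assumes "inj_on f A" "x \<in> A" "y \<in> A"
  shows "pref (rank_order A f) y x \<longleftrightarrow> f x < f y"
  using assms unfolding pref_def rank_order_def inj_on_def by (auto simp: le_less)

lemma pref_rev_profile: "pref (rev_profile p i) y x \<longleftrightarrow> pref (p i) x y"
  unfolding pref_def rev_profile_def by auto

lemma D_mu_eq_singleton:
  assumes h: "h = 2 * k" "0 < k" and c: "c \<in> {1..n}"
    and c_unbeaten: "\<And>y. y \<in> {1..n} \<Longrightarrow> card {i \<in> {1..h}. pref (p i) y c} \<le> k"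
    and others_beaten: "\<And>x. x \<in> {1..n} \<Longrightarrow> x \<noteq> c \<Longrightarrow>
                          \<exists>y \<in> {1..n}. k < card {i \<in> {1..h}. pref (p i) y x}"
  shows "D n h (mu n h p) p = {c}"
proof -
  have D_eq: "D n h (k + 1) p = {c}"
    using c c_unbeaten others_beaten unfolding D_def by fastforce
  have "mu n h p = k + 1"
    unfolding mu_def
  proof (rule Least_equality)
    show "h < 2 * (k + 1) \<and> k + 1 \<le> h \<and> D n h (k + 1) p \<noteq> {}"
      using D_eq h by auto
  qed (use h in auto)
  with D_eq show ?thesis by simp
qed

lemma card_dvd_in_interval:
  assumes "0 < m"
  shows "card {i \<in> {1..h}. m dvd a + i} \<le> (h + m - 1) div m"
proof -
  let ?B = "{i \<in> {1..h}. m dvd a + i}"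
  \<comment> \<open>two such \<open>i\<close> never lie in the same block of \<open>m\<close> consecutive integers\<close>
  have "inj_on (\<lambda>i. (i - 1) div m) ?B"
  proof (rule inj_onI)
    fix i j assume i: "i \<in> ?B" and j: "j \<in> ?B" and div_eq: "(i - 1) div m = (j - 1) div m"
    have "(a + 1 + (i - 1)) mod m = (a + 1 + (j - 1)) mod m"
      using i j by (simp add: dvd_eq_mod_eq_0)
    then have "(i - 1) mod m = (j - 1) mod m"
      by (simp add: nat_mod_eq_iff)
    with div_eq have "i - 1 = j - 1" by (metis div_mod_decomp)
    with i j show "i = j" by auto
  qed
  moreover have "(\<lambda>i. (i - 1) div m) ` ?B \<subseteq> {..<(h + m - 1) div m}"
  proof
    fix z assume "z \<in> (\<lambda>i. (i - 1) div m) ` ?B"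
    then obtain i where "1 \<le> i" "i \<le> h" "z = (i - 1) div m" by auto
    then have "z \<le> (h - 1) div m" by (simp add: div_le_mono)
    also have "\<dots> < (h - 1 + m) div m"
      using assms by simp
    also have "h - 1 + m = h + m - 1"
      using \<open>1 \<le> i\<close> \<open>i \<le> h\<close> by simp
    finally show "z \<in> {..<(h + m - 1) div m}" by simp
  qed
  ultimately show ?thesis
    by (metis card_image card_lessThan card_mono finite_lessThan)
qed

definition cyclic_rank :: "nat \<Rightarrow> nat \<Rightarrow> nat \<Rightarrow> nat \<Rightarrow> nat" where
  "cyclic_rank n k i x =
     (if x = n then (if i \<le> k then n else 0) else (x + i) mod (n - 1) + 1)"

definition cyclic_profile :: "nat \<Rightarrow> nat \<Rightarrow> nat \<Rightarrow> nat rel" where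
  "cyclic_profile n k i = rank_order {1..n} (cyclic_rank n k i)"

lemma cyclic_rank_other:
  assumes "2 \<le> n" "x \<noteq> n"
  shows "cyclic_rank n k i x = (x + i) mod (n - 1) + 1" "cyclic_rank n k i x \<in> {1..<n}"
proof -
  have "(x + i) mod (n - 1) < n - 1"
    using assms by simp
  then have "(x + i) mod (n - 1) + 1 < n"
    by linarith
  with assms show "cyclic_rank n k i x = (x + i) mod (n - 1) + 1"
    "cyclic_rank n k i x \<in> {1..<n}"
    by (auto simp: cyclic_rank_def)
qed

lemma inj_on_cyclic_rank:
  assumes "2 \<le> n"
  shows "inj_on (cyclic_rank n k i) {1..n}"
proof (rule inj_onI)
  fix x y assume x: "x \<in> {1..n}" and y: "y \<in> {1..n}"
    and eq: "cyclic_rank n k i x = cyclic_rank n k i y"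
  show "x = y"
  proof (cases "x = n \<or> y = n")
    case True
    with eq assms cyclic_rank_other(2)[of n x k i] cyclic_rank_other(2)[of n y k i]
    show ?thesis
      by (auto simp: cyclic_rank_def split: if_splits)
  next
    case False
    with eq assms have "(x + i) mod (n - 1) = (y + i) mod (n - 1)"
      by (simp add: cyclic_rank_other(1))
    then have "x mod (n - 1) = y mod (n - 1)"
      by (simp add: nat_mod_eq_iff)
    moreover have "x \<le> n - 1" "y \<le> n - 1" "1 \<le> x" "1 \<le> y"
      using False x y by auto
    ultimately show ?thesis
      by (metis le_neq_implies_less mod_less mod_self zero_less_one not_one_le_zero le_less)
  qed
qed

lemma is_profile_cyclic_profile:
  assumes "2 \<le> n"
  shows "is_profile n h (cyclic_profile n k)"
  unfolding is_profile_def cyclic_profile_def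
  using linear_order_on_rank_order[OF inj_on_cyclic_rank[OF assms]] by blast

lemma pref_cyclic_profile:
  assumes "2 \<le> n" "x \<in> {1..n}" "y \<in> {1..n}"
  shows "pref (cyclic_profile n k i) y x \<longleftrightarrow> cyclic_rank n k i x < cyclic_rank n k i y"
  unfolding cyclic_profile_def using pref_rank_order[OF inj_on_cyclic_rank] assms by blast

lemma card_pref_over_top:
  assumes "2 \<le> n" "y \<in> {1..n}"
  shows "card {i \<in> {1..2 * k}. pref (cyclic_profile n k i) y n} \<le> k"
proof -
  have "{i \<in> {1..2 * k}. pref (cyclic_profile n k i) y n} \<subseteq> {k + 1..2 * k}"
  proof safe
    fix i assume "i \<in> {1..2 * k}" and "pref (cyclic_profile n k i) y n"
    then show "i \<in> {k + 1..2 * k}"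
      using assms pref_cyclic_profile[of n n y k i] cyclic_rank_other(2)[of n y k i]
      by (auto simp: cyclic_rank_def pref_def split: if_splits)
  qed
  then show ?thesis
    using card_mono[of "{k + 1..2 * k}"] by fastforce
qed

lemma card_pref_top_over:
  assumes "2 \<le> n" "y \<in> {1..n}"
  shows "card {i \<in> {1..2 * k}. pref (cyclic_profile n k i) n y} \<le> k"
proof -
  have "{i \<in> {1..2 * k}. pref (cyclic_profile n k i) n y} \<subseteq> {1..k}"
  proof safe
    fix i assume "i \<in> {1..2 * k}" and "pref (cyclic_profile n k i) n y"
    then show "i \<in> {1..k}"
      using assms pref_cyclic_profile[of n y n k i] cyclic_rank_other(2)[of n y k i]
      by (auto simp: cyclic_rank_def pref_def split: if_splits)
  qed
  then show ?thesis
    using card_mono[of "{1..k}"] by fastforce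
qed

text \<open>The cyclic successor of \<open>x\<close> among \<open>1, \<dots>, n-1\<close> is ranked above \<open>x\<close> unless the shift
  by \<open>i\<close> sends it to the bottom, i.e. unless \<open>n - 1\<close> divides \<open>x + 1 + i\<close>.\<close>
lemma card_pref_cyclic_successor:
  assumes n: "2 \<le> n" and x: "x \<in> {1..n - 1}" and s: "s \<in> {1..n - 1}"
    and successor: "s mod (n - 1) = Suc x mod (n - 1)"
  shows "h - (h + n - 2) div (n - 1) \<le> card {i \<in> {1..h}. pref (cyclic_profile n k i) s x}"
proof -
  let ?m = "n - 1"
  let ?G = "{i \<in> {1..h}. pref (cyclic_profile n k i) s x}"
  let ?B = "{i \<in> {1..h}. ?m dvd Suc x + i}"
  have "{1..h} \<subseteq> ?G \<union> ?B"
  proof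
    fix i assume i: "i \<in> {1..h}"
    show "i \<in> ?G \<union> ?B"
    proof (cases "?m dvd Suc x + i")
      case False
      have "(s + i) mod ?m = Suc (x + i) mod ?m"
        using successor by (metis add_Suc mod_add_left_eq)
      also have "\<dots> = Suc ((x + i) mod ?m)"
      proof -
        have "Suc (x + i) mod ?m \<noteq> 0"
          using False by (simp add: dvd_eq_mod_eq_0)
        then show ?thesis
          by (metis mod_Suc)
      qed
      moreover have "x \<noteq> n" "s \<noteq> n" and xs_range: "x \<in> {1..n}" "s \<in> {1..n}"
        using x s n by auto
      ultimately have "cyclic_rank n k i x < cyclic_rank n k i s"
        using n by (simp add: cyclic_rank_other(1))
      then have "pref (cyclic_profile n k i) s x"
        using pref_cyclic_profile[OF n xs_range] by blast
      with i show ?thesis by simp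
    qed (use i in auto)
  qed
  then have "card {1..h} \<le> card (?G \<union> ?B)"
    by (intro card_mono) auto
  then have "h \<le> card ?G + card ?B"
    using card_Un_le[of ?G ?B] by simp
  moreover have "card ?B \<le> (h + n - 2) div ?m"
    using card_dvd_in_interval[of ?m h "Suc x"] n by (simp add: numeral_2_eq_2)
  ultimately show ?thesis by linarith
qed

lemma D_mu_cyclic_profile:
  assumes k: "0 < k" and h_bound: "2 * k \<le> (n - 1) * (k - 1)"
  shows "D n (2 * k) (mu n (2 * k) (cyclic_profile n k)) (cyclic_profile n k) = {n}"
    and "D n (2 * k) (mu n (2 * k) (rev_profile (cyclic_profile n k)))
           (rev_profile (cyclic_profile n k)) = {n}"
proof -
  let ?p = "cyclic_profile n k"
  have n: "2 \<le> n"
    using assms by (cases "n \<le> 1") auto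
  have "2 * k + n - 2 < k * (n - 1)"
    using h_bound n k by (simp add: algebra_simps diff_mult_distrib2)
  then have "(2 * k + n - 2) div (n - 1) \<le> k - 1"
    using less_mult_imp_div_less by fastforce
  then have successor_beats: "k < card {i \<in> {1..2 * k}. pref (?p i) s x}"
    if "x \<in> {1..n - 1}" "s \<in> {1..n - 1}" "s mod (n - 1) = Suc x mod (n - 1)" for x s
    using card_pref_cyclic_successor[OF n that, of "2 * k" k] k by linarith
  show "D n (2 * k) (mu n (2 * k) ?p) ?p = {n}"
  proof (rule D_mu_eq_singleton[OF refl k])
    fix x assume x: "x \<in> {1..n}" "x \<noteq> n"
    define s where "s = (if x = n - 1 then 1 else x + 1)"
    have "x \<in> {1..n - 1}" "s \<in> {1..n - 1}" "s mod (n - 1) = Suc x mod (n - 1)"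
      using x n by (auto simp: s_def mod_Suc)
    with successor_beats show "\<exists>y \<in> {1..n}. k < card {i \<in> {1..2 * k}. pref (?p i) y x}"
      by (meson atLeastAtMost_iff diff_le_self le_trans)
  qed (use n card_pref_over_top in auto)
  show "D n (2 * k) (mu n (2 * k) (rev_profile ?p)) (rev_profile ?p) = {n}"
  proof (rule D_mu_eq_singleton[OF refl k], unfold pref_rev_profile)
    fix x assume x: "x \<in> {1..n}" "x \<noteq> n"
    define z where "z = (if x = 1 then n - 1 else x - 1)"
    have "z \<in> {1..n - 1}" "x \<in> {1..n - 1}" "x mod (n - 1) = Suc z mod (n - 1)"
      using x n by (auto simp: z_def mod_Suc)
    with successor_beats show "\<exists>y \<in> {1..n}. k < card {i \<in> {1..2 * k}. pref (?p i) x y}"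
      by (meson atLeastAtMost_iff diff_le_self le_trans)
  qed (use n card_pref_top_over in auto)
qed

theorem proposition9:
  fixes n h :: nat
  assumes "n \<ge> 4" and "even h" and "h \<ge> 2"
    and "real h \<ge> 2 * (real n - 1) / (real n - 3)"
  shows "\<exists>p. is_profile n h p \<and>
           D n h (mu n h p) p = {n} \<and>
           D n h (mu n h (rev_profile p)) (rev_profile p) = {n}"
proof -
  obtain k where h: "h = 2 * k"
    using \<open>even h\<close> by blast
  with \<open>h \<ge> 2\<close> have k: "0 < k" by simp
  have "2 * (real n - 1) \<le> real h * (real n - 3)"
    using assms(1,4) by (simp add: pos_divide_le_eq)
  with h have "real h \<le> (real n - 1) * (real k - 1)"
    by (simp add: algebra_simps)
  also have "\<dots> = real ((n - 1) * (k - 1))"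
    using assms(1) k by (simp add: of_nat_diff)
  finally have "2 * k \<le> (n - 1) * (k - 1)"
    unfolding h of_nat_le_iff .
  with h k assms(1) show ?thesis
    using is_profile_cyclic_profile D_mu_cyclic_profile
    by (intro exI[of _ "cyclic_profile n k"]) auto
qed

end
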